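(* Consider a Bayesian network as described in the context, with source node $X$. Let $W$ be a node and $V$ a set of nodes such that $W\notin V$, $W\neq X$, and $W>v$ for every $v\in V$. Then $$\eta_{\mathrm{KL}}(P_{V\cup\{W\}|X})\le \eta_W\,\eta_{\mathrm{KL}}(P_{V\cup \mathrm{pa}(W)|X})+(1-\eta_W)\,\eta_{\mathrm{KL}}(P_{V|X}).$$ Moreover, for every set of nodes $V$, $$\eta_{\mathrm{KL}}(P_{V|X})\le \mathrm{perc}(V).$$ In particular, if $\eta_v<1$ for all nodes $v\ne X$, then $\eta_{\mathrm{KL}}(P_{V|X})<1$ for every $V$ not containing $X$.
   Context: Bayesian network: a finite directed acyclic graph whose vertices are random variables $Y_v$ taking values in finite alphabets; each vertex $v$ with parents $\mathrm{pa}(v)$ is equipped with a conditional distribution $P_{Y_v|Y_{\mathrm{pa}(v)}}$, except a distinguished source node $X$ with no inbound edges (other parentless nodes have specified marginals and are independent of everything else given nothing). Vertices are topologically sorted: $v_1>v_2$ implies there is no directed path from $v_1$ to $v_2$. For a set of nodes $V$, $P_{V|X}$ denotes the induced kernel from $X$ to $Y_V=(Y_v)_{v\in V}$. For a kernel $K$, $\eta_{\mathrm{KL}}(K)=\sup_Q\sup_P D(K\circ P\|K\circ Q)/D(P\|Q)$, the supremum over input distributions $Q$ not a point mass and $P$ with $0<D(P\|Q)<\infty$, where $D$ is KL divergence and $K\circ P$ the output distribution. Set $\eta_v=\eta_{\mathrm{KL}}(P_{Y_v|Y_{\mathrm{pa}(v)}})$ (with $\eta_v=0$ for parentless nodes other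 than $X$). Site percolation: each node $v\ne X$ is independently removed with probability $1-\eta_v$ ($X$ is never removed); $\mathrm{perc}(V)$ is the probability that there exists a sequence of nodes $v_1=X,v_2,\dots,v_n$ with $v_n\in V$, each $(v_i,v_{i+1})$ a directed edge, and no $v_i$ removed (so $\mathrm{perc}(V)=1$ if $X\in V$). *)

theory Defs
  imports "HOL-Analysis.Analysis"
begin

text \<open>A kernel from a finite input alphabet I to a finite output alphabet O is a
function K with K i o the probability of output o given input i.\<close>

definition is_dist :: "'i set \<Rightarrow> ('i \<Rightarrow> real) \<Rightarrow> bool" where
  "is_dist I P \<longleftrightarrow> (\<forall>i\<in>I. 0 \<le> P i) \<and> (\<Sum>i\<in>I. P i) = 1"

definition point_mass :: "'i set \<Rightarrow> ('i \<Rightarrow> real) \<Rightarrow> bool" where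
  "point_mass I Q \<longleftrightarrow> (\<exists>i\<in>I. \<forall>j\<in>I. Q j = (if j = i then 1 else 0))"

text \<open>Absolute continuity of P w.r.t. Q, i.e. D(P||Q) < infinity.\<close>
definition abs_cont :: "'i set \<Rightarrow> ('i \<Rightarrow> real) \<Rightarrow> ('i \<Rightarrow> real) \<Rightarrow> bool" where
  "abs_cont I P Q \<longleftrightarrow> (\<forall>i\<in>I. 0 < P i \<longrightarrow> 0 < Q i)"

text \<open>KL divergence (natural log), meaningful when abs_cont I P Q holds.\<close>
definition kl_div :: "'i set \<Rightarrow> ('i \<Rightarrow> real) \<Rightarrow> ('i \<Rightarrow> real) \<Rightarrow> real" where
  "kl_div I P Q = (\<Sum>i\<in>I. if P i = 0 then 0 else P i * ln (P i / Q i))"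

definition push :: "'i set \<Rightarrow> ('i \<Rightarrow> 'o \<Rightarrow> real) \<Rightarrow> ('i \<Rightarrow> real) \<Rightarrow> 'o \<Rightarrow> real" where
  "push I K P = (\<lambda>b. \<Sum>i\<in>I. P i * K i b)"

text \<open>eta_KL(K) = sup over Q not a point mass and P with 0 < D(P||Q) < infinity of
D(K o P || K o Q) / D(P || Q).  (If no admissible pair exists, i.e. the input alphabet
is a singleton, the value is 0; otherwise inserting 0 does not change the supremum
since all ratios are nonnegative.)\<close>
definition eta_KL :: "'i set \<Rightarrow> 'o set \<Rightarrow> ('i \<Rightarrow> 'o \<Rightarrow> real) \<Rightarrow> real" where
  "eta_KL I Y K = Sup (insert 0
     {kl_div Y (push I K P) (push I K Q) / kl_div I P Q | P Q.
        is_dist I P \<and> is_dist I Q \<and> \<not> point_mass I Q \<and> abs_cont I P Q \<and> 0 < kl_div I P Q})"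

text \<open>Nodes N (finite) of type 'n, directed edges E, source node x0, finite nonempty
alphabets A v (values of type 'a), conditional distributions K v pa b = P(Y_v = b | Y_pa(v) = pa)
where pa ranges over assignments in PiE (parents v) A.  A topological sort is given by an
injective numbering ord on N with edges going from smaller to larger numbers (so
ord v1 > ord v2 implies there is no directed path from v1 to v2).\<close>

definition parents :: "('n \<times> 'n) set \<Rightarrow> 'n \<Rightarrow> 'n set" where
  "parents E v = {u. (u, v) \<in> E}"

definition bayes_net ::
  "'n set \<Rightarrow> ('n \<times> 'n) set \<Rightarrow> 'n \<Rightarrow> ('n \<Rightarrow> 'a set) \<Rightarrow> ('n \<Rightarrow> ('n \<Rightarrow> 'a) \<Rightarrow> 'a \<Rightarrow> real)
    \<Rightarrow> ('n \<Rightarrow> nat) \<Rightarrow> bool" where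
  "bayes_net N E x0 A K ord \<longleftrightarrow>
     finite N \<and> x0 \<in> N \<and> E \<subseteq> N \<times> N \<and> acyclic E \<and>
     (\<forall>u. (u, x0) \<notin> E) \<and>
     (\<forall>v\<in>N. finite (A v) \<and> A v \<noteq> {}) \<and>
     (\<forall>v\<in>N - {x0}. \<forall>p\<in>PiE (parents E v) A.
          (\<forall>b\<in>A v. 0 \<le> K v p b) \<and> (\<Sum>b\<in>A v. K v p b) = 1) \<and>
     inj_on ord N \<and> (\<forall>(u, v)\<in>E. ord u < ord v)"

definition joint ::
  "'n set \<Rightarrow> ('n \<times> 'n) set \<Rightarrow> 'n \<Rightarrow> ('n \<Rightarrow> ('n \<Rightarrow> 'a) \<Rightarrow> 'a \<Rightarrow> real) \<Rightarrow> 'a \<Rightarrow> ('n \<Rightarrow> 'a) \<Rightarrow> real" where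
  "joint N E x0 K x y =
     (if y x0 = x then 1 else 0) * (\<Prod>v\<in>N - {x0}. K v (restrict y (parents E v)) (y v))"

definition induced_kernel ::
  "'n set \<Rightarrow> ('n \<times> 'n) set \<Rightarrow> 'n \<Rightarrow> ('n \<Rightarrow> 'a set) \<Rightarrow> ('n \<Rightarrow> ('n \<Rightarrow> 'a) \<Rightarrow> 'a \<Rightarrow> real)
     \<Rightarrow> 'n set \<Rightarrow> 'a \<Rightarrow> ('n \<Rightarrow> 'a) \<Rightarrow> real" where
  "induced_kernel N E x0 A K V x z =
     (\<Sum>y\<in>{y \<in> PiE N A. restrict y V = z}. joint N E x0 K x y)"

definition eta_set ::
  "'n set \<Rightarrow> ('n \<times> 'n) set \<Rightarrow> 'n \<Rightarrow> ('n \<Rightarrow> 'a set) \<Rightarrow> ('n \<Rightarrow> ('n \<Rightarrow> 'a) \<Rightarrow> 'a \<Rightarrow> real)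
     \<Rightarrow> 'n set \<Rightarrow> real" where
  "eta_set N E x0 A K V = eta_KL (A x0) (PiE V A) (induced_kernel N E x0 A K V)"

definition eta_node ::
  "('n \<times> 'n) set \<Rightarrow> ('n \<Rightarrow> 'a set) \<Rightarrow> ('n \<Rightarrow> ('n \<Rightarrow> 'a) \<Rightarrow> 'a \<Rightarrow> real) \<Rightarrow> 'n \<Rightarrow> real" where
  "eta_node E A K v =
     (if parents E v = {} then 0 else eta_KL (PiE (parents E v) A) (A v) (K v))"

text \<open>Site percolation: each node v \<noteq> x0 is kept independently with probability p v.
S is the set of kept nodes other than x0; perc(V) is the probability that some node of V
is reachable from x0 by a directed path through kept nodes.\<close>
definition perc :: "'n set \<Rightarrow> ('n \<times> 'n) set \<Rightarrow> 'n \<Rightarrow> ('n \<Rightarrow> real) \<Rightarrow> 'n set \<Rightarrow> real" where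
  "perc N E x0 p V =
     (\<Sum>S\<in>Pow (N - {x0}).
        (\<Prod>v\<in>S. p v) * (\<Prod>v\<in>(N - {x0}) - S. 1 - p v) *
        (if \<exists>w\<in>V. (x0, w) \<in> (E \<inter> (insert x0 S \<times> insert x0 S))\<^sup>* then 1 else 0))"

end

theory Submission
  imports Defs
begin

text \<open>For W above every node of V, marginalising out all nodes above W shows that Y over
  insert W V arises from Y over U = V \<union> pa(W) by applying the channel of W to the parent
  coordinates. Grouping the outputs by their restriction v to V, the strong data processing
  inequality for that channel keeps only the fraction eta_W of the divergence carried inside
  each fibre {u. u restricted to V = v}, while the divergence of the fibre totals (which is the
  divergence on V) is kept in full; this gives the recursion. Site percolation satisfies the
  same recursion with equality, by conditioning on whether W is kept, so induction on the top
  node of V gives eta(V) \<le> perc(V). When every eta_v < 1, keeping no site has positive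
  probability and reaches only x0, whence perc(V) < 1.\<close>

definition rel_entr :: "real \<Rightarrow> real \<Rightarrow> real" where
  "rel_entr a b = (if a = 0 then 0 else a * ln (a / b))"

lemma kl_div_eq_sum_rel_entr: "kl_div I P Q = (\<Sum>i\<in>I. rel_entr (P i) (Q i))"
  unfolding kl_div_def rel_entr_def by simp

lemma rel_entr_0_left [simp]: "rel_entr 0 b = 0"
  by (simp add: rel_entr_def)

lemma rel_entr_same [simp]: "rel_entr a a = 0"
  by (simp add: rel_entr_def)

lemma rel_entr_mult_right: "rel_entr (a * k) (b * k) = k * rel_entr a b"
  by (cases "k = 0") (auto simp: rel_entr_def)

lemma rel_entr_mult:
  assumes "0 < \<alpha>" "0 < \<beta>" "0 \<le> s" "0 < s \<Longrightarrow> 0 < t"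
  shows "rel_entr (\<alpha> * s) (\<beta> * t) = \<alpha> * rel_entr s t + s * rel_entr \<alpha> \<beta>"
proof (cases "s = 0")
  case False
  with assms have "0 < s" "0 < t" by auto
  then show ?thesis
    using assms by (auto simp: rel_entr_def ln_mult ln_div algebra_simps)
qed simp

lemma rel_entr_ge_diff:
  assumes "0 \<le> a" "0 \<le> b" "0 < a \<Longrightarrow> 0 < b"
  shows "a - b \<le> rel_entr a b"
proof (cases "a = 0")
  case False
  with assms have "0 < a" "0 < b" by auto
  then have "ln (b / a) \<le> b / a - 1" by (intro ln_le_minus_one) simp
  then have "a * (1 - b / a) \<le> a * ln (a / b)"
    using \<open>0 < a\<close> \<open>0 < b\<close> by (simp add: ln_div)
  then show ?thesis using \<open>0 < a\<close> by (simp add: rel_entr_def algebra_simps)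
qed (use assms in simp)

text \<open>The log-sum inequality: rescale every b i by c = (\<Sum>a)/(\<Sum>b) and use
  a - b \<le> rel_entr a b termwise.\<close>
lemma rel_entr_sum_le:
  assumes "finite I" "\<And>i. i \<in> I \<Longrightarrow> 0 \<le> a i" "\<And>i. i \<in> I \<Longrightarrow> 0 \<le> b i"
    "\<And>i. i \<in> I \<Longrightarrow> 0 < a i \<Longrightarrow> 0 < b i"
  shows "rel_entr (\<Sum>i\<in>I. a i) (\<Sum>i\<in>I. b i) \<le> (\<Sum>i\<in>I. rel_entr (a i) (b i))"
proof (cases "\<exists>i\<in>I. 0 < a i")
  case False
  with assms(2) have "\<And>i. i \<in> I \<Longrightarrow> a i = 0" by force
  then show ?thesis by simp
next
  case True
  define \<alpha> where "\<alpha> = (\<Sum>i\<in>I. a i)"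
  define \<beta> where "\<beta> = (\<Sum>i\<in>I. b i)"
  from True obtain j where "j \<in> I" "0 < a j" by blast
  then have "0 < \<alpha>" "0 < \<beta>"
    using assms unfolding \<alpha>_def \<beta>_def by (auto intro!: sum_pos2[of I j])
  define c where "c = \<alpha> / \<beta>"
  have "0 < c" using \<open>0 < \<alpha>\<close> \<open>0 < \<beta>\<close> by (simp add: c_def)
  have "rel_entr (a i) (b i) = rel_entr (a i) (c * b i) + a i * ln c" if "i \<in> I" for i
    using rel_entr_mult[of 1 c "a i" "b i"] assms that \<open>0 < c\<close>
    by (simp add: rel_entr_def ln_div)
  then have "(\<Sum>i\<in>I. rel_entr (a i) (b i)) = (\<Sum>i\<in>I. rel_entr (a i) (c * b i)) + \<alpha> * ln c"
    by (simp add: sum.distrib \<alpha>_def sum_distrib_right)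
  moreover have "(\<Sum>i\<in>I. a i - c * b i) \<le> (\<Sum>i\<in>I. rel_entr (a i) (c * b i))"
    using assms \<open>0 < c\<close> by (intro sum_mono rel_entr_ge_diff) auto
  moreover have "(\<Sum>i\<in>I. c * b i) = c * \<beta>" by (simp add: \<beta>_def sum_distrib_left)
  then have "(\<Sum>i\<in>I. a i - c * b i) = 0"
    using \<open>0 < \<beta>\<close> by (simp add: sum_subtractf c_def \<alpha>_def)
  ultimately show ?thesis
    using \<open>0 < \<alpha>\<close> by (simp add: rel_entr_def c_def flip: \<alpha>_def \<beta>_def)
qed

lemma is_dist_finite: "is_dist I P \<Longrightarrow> finite I"
  unfolding is_dist_def by (metis sum.infinite zero_neq_one)

lemma kl_div_nonneg:
  assumes "is_dist I P" "is_dist I Q" "abs_cont I P Q"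
  shows "0 \<le> kl_div I P Q"
proof -
  have "rel_entr (\<Sum>i\<in>I. P i) (\<Sum>i\<in>I. Q i) \<le> kl_div I P Q"
    unfolding kl_div_eq_sum_rel_entr using assms is_dist_finite[OF assms(1)]
    by (intro rel_entr_sum_le) (auto simp: is_dist_def abs_cont_def)
  then show ?thesis using assms by (simp add: is_dist_def)
qed

definition stochastic :: "'i set \<Rightarrow> 'o set \<Rightarrow> ('i \<Rightarrow> 'o \<Rightarrow> real) \<Rightarrow> bool" where
  "stochastic I Y K \<longleftrightarrow> (\<forall>i\<in>I. is_dist Y (K i))"

lemma is_dist_push:
  assumes "is_dist I P" "stochastic I Y K" "finite Y"
  shows "is_dist Y (push I K P)"
proof -
  have "(\<Sum>b\<in>Y. push I K P b) = (\<Sum>i\<in>I. P i * (\<Sum>b\<in>Y. K i b))"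
    unfolding push_def by (subst sum.swap) (simp add: sum_distrib_left)
  also have "\<dots> = (\<Sum>i\<in>I. P i)"
    using assms by (intro sum.cong) (auto simp: stochastic_def is_dist_def)
  finally show ?thesis
    using assms by (auto simp: is_dist_def push_def stochastic_def intro!: sum_nonneg)
qed

lemma abs_cont_push:
  assumes "is_dist I P" "is_dist I Q" "abs_cont I P Q" "stochastic I Y K"
  shows "abs_cont Y (push I K P) (push I K Q)"
  unfolding abs_cont_def
proof (intro ballI impI)
  fix b assume "b \<in> Y" "0 < push I K P b"
  have nonneg: "0 \<le> P i" "0 \<le> Q i" "0 \<le> K i b" if "i \<in> I" for i
    using assms that \<open>b \<in> Y\<close> by (auto simp: is_dist_def stochastic_def)
  obtain i where "i \<in> I" "0 < P i * K i b"
    using \<open>0 < push I K P b\<close> unfolding push_def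
    by (metis (no_types, lifting) linorder_not_less sum_nonpos)
  with nonneg[OF \<open>i \<in> I\<close>] have "0 < Q i * K i b"
    using assms(3) \<open>i \<in> I\<close> by (auto simp: abs_cont_def zero_less_mult_iff)
  then show "0 < push I K Q b"
    unfolding push_def using is_dist_finite[OF assms(1)] \<open>i \<in> I\<close> nonneg
    by (intro sum_pos2[of _ i]) auto
qed

lemma kl_div_push_le:
  assumes "is_dist I P" "is_dist I Q" "abs_cont I P Q" "stochastic I Y K" "finite Y"
  shows "kl_div Y (push I K P) (push I K Q) \<le> kl_div I P Q"
proof -
  have "kl_div Y (push I K P) (push I K Q)
      = (\<Sum>b\<in>Y. rel_entr (\<Sum>i\<in>I. P i * K i b) (\<Sum>i\<in>I. Q i * K i b))"
    by (simp add: kl_div_eq_sum_rel_entr push_def)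
  also have "\<dots> \<le> (\<Sum>b\<in>Y. \<Sum>i\<in>I. rel_entr (P i * K i b) (Q i * K i b))"
    using assms is_dist_finite[OF assms(1)]
    by (intro sum_mono rel_entr_sum_le)
       (auto simp: is_dist_def stochastic_def abs_cont_def zero_less_mult_iff)
  also have "\<dots> = (\<Sum>b\<in>Y. \<Sum>i\<in>I. K i b * rel_entr (P i) (Q i))"
    by (simp only: rel_entr_mult_right)
  also have "\<dots> = (\<Sum>i\<in>I. (\<Sum>b\<in>Y. K i b) * rel_entr (P i) (Q i))"
    by (subst sum.swap) (simp add: sum_distrib_right)
  also have "\<dots> = kl_div I P Q"
    using assms by (simp add: kl_div_eq_sum_rel_entr is_dist_def stochastic_def)
  finally show ?thesis .
qed

definition kl_ratios :: "'i set \<Rightarrow> 'o set \<Rightarrow> ('i \<Rightarrow> 'o \<Rightarrow> real) \<Rightarrow> real set" where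
  "kl_ratios I Y K = {kl_div Y (push I K P) (push I K Q) / kl_div I P Q | P Q.
     is_dist I P \<and> is_dist I Q \<and> \<not> point_mass I Q \<and> abs_cont I P Q \<and> 0 < kl_div I P Q}"

lemma eta_KL_eq_Sup_kl_ratios: "eta_KL I Y K = Sup (insert 0 (kl_ratios I Y K))"
  unfolding eta_KL_def kl_ratios_def by simp

lemma kl_ratios_subset:
  assumes "stochastic I Y K" "finite Y"
  shows "kl_ratios I Y K \<subseteq> {0..1}"
proof
  fix r assume "r \<in> kl_ratios I Y K"
  then obtain P Q where PQ: "is_dist I P" "is_dist I Q" "abs_cont I P Q" "0 < kl_div I P Q"
    and r: "r = kl_div Y (push I K P) (push I K Q) / kl_div I P Q"
    unfolding kl_ratios_def by blast
  have "kl_div Y (push I K P) (push I K Q) \<le> kl_div I P Q"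
    using kl_div_push_le PQ assms by blast
  moreover have "0 \<le> kl_div Y (push I K P) (push I K Q)"
    using kl_div_nonneg is_dist_push abs_cont_push PQ assms by blast
  ultimately show "r \<in> {0..1}" using PQ(4) r by auto
qed

lemma bdd_above_kl_ratios:
  "stochastic I Y K \<Longrightarrow> finite Y \<Longrightarrow> bdd_above (insert 0 (kl_ratios I Y K))"
  by (rule bdd_aboveI[of _ 1]) (use kl_ratios_subset in fastforce)

lemma eta_KL_nonneg: "stochastic I Y K \<Longrightarrow> finite Y \<Longrightarrow> 0 \<le> eta_KL I Y K"
  unfolding eta_KL_eq_Sup_kl_ratios by (intro cSup_upper bdd_above_kl_ratios) auto

lemma eta_KL_le_1: "stochastic I Y K \<Longrightarrow> finite Y \<Longrightarrow> eta_KL I Y K \<le> 1"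
  unfolding eta_KL_eq_Sup_kl_ratios by (rule cSup_least) (use kl_ratios_subset in fastforce)+

text \<open>The supremum defining eta_KL excludes point masses Q, but for them the data processing
  inequality is trivial: abs_cont forces P = Q.\<close>
lemma kl_div_push_le_eta_KL:
  assumes "stochastic I Y K" "finite Y" "is_dist I P" "is_dist I Q" "abs_cont I P Q"
  shows "kl_div Y (push I K P) (push I K Q) \<le> eta_KL I Y K * kl_div I P Q"
proof (cases "point_mass I Q")
  case True
  then obtain i where i: "i \<in> I" "\<And>j. j \<in> I \<Longrightarrow> Q j = (if j = i then 1 else 0)"
    unfolding point_mass_def by blast
  have P0: "P j = 0" if "j \<in> I" "j \<noteq> i" for j
    using assms(3,5) i that by (force simp: is_dist_def abs_cont_def)
  then have "(\<Sum>j\<in>I. P j) = (\<Sum>j\<in>{i}. P j)"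
    using is_dist_finite[OF assms(3)] i by (intro sum.mono_neutral_right) auto
  then have "P j = Q j" if "j \<in> I" for j
    using assms(3) i P0 that by (auto simp: is_dist_def)
  then have "push I K P = push I K Q"
    unfolding push_def by (intro ext sum.cong) auto
  then show ?thesis
    using kl_div_nonneg[OF assms(3-5)] eta_KL_nonneg[OF assms(1,2)]
    by (simp add: kl_div_eq_sum_rel_entr)
next
  case False
  show ?thesis
  proof (cases "0 < kl_div I P Q")
    case True
    with False assms have "kl_div Y (push I K P) (push I K Q) / kl_div I P Q \<in> kl_ratios I Y K"
      unfolding kl_ratios_def by blast
    then have "kl_div Y (push I K P) (push I K Q) / kl_div I P Q \<le> eta_KL I Y K"
      unfolding eta_KL_eq_Sup_kl_ratios using bdd_above_kl_ratios[OF assms(1,2)]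
      by (intro cSup_upper) auto
    then show ?thesis using True by (simp add: pos_divide_le_eq)
  next
    case False
    then have "kl_div I P Q = 0" using kl_div_nonneg[OF assms(3-5)] by simp
    then show ?thesis using kl_div_push_le[OF assms(3-5,1,2)] by simp
  qed
qed

lemma eta_KL_le:
  assumes "0 \<le> c"
    and "\<And>P Q. is_dist I P \<Longrightarrow> is_dist I Q \<Longrightarrow> abs_cont I P Q \<Longrightarrow>
           kl_div Y (push I K P) (push I K Q) \<le> c * kl_div I P Q"
  shows "eta_KL I Y K \<le> c"
  unfolding eta_KL_eq_Sup_kl_ratios
proof (rule cSup_least)
  fix r assume "r \<in> insert 0 (kl_ratios I Y K)"
  then show "r \<le> c"
  proof
    assume "r \<in> kl_ratios I Y K"
    then obtain P Q where PQ: "is_dist I P" "is_dist I Q" "abs_cont I P Q" "0 < kl_div I P Q"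
      and r: "r = kl_div Y (push I K P) (push I K Q) / kl_div I P Q"
      unfolding kl_ratios_def by blast
    show ?thesis using assms(2)[OF PQ(1-3)] PQ(4) r by (simp add: pos_divide_le_eq)
  qed (use assms in simp)
qed auto

lemma eta_KL_singleton_input:
  assumes "stochastic {i} Y K" "finite Y"
  shows "eta_KL {i} Y K = 0"
proof (rule antisym)
  show "eta_KL {i} Y K \<le> 0"
  proof (rule eta_KL_le)
    fix P Q assume "is_dist {i} P" "is_dist {i} Q"
    then have "push {i} K P = push {i} K Q" by (simp add: push_def is_dist_def)
    then show "kl_div Y (push {i} K P) (push {i} K Q) \<le> 0 * kl_div {i} P Q"
      by (simp add: kl_div_eq_sum_rel_entr)
  qed simp
qed (rule eta_KL_nonneg[OF assms])

lemma eta_KL_singleton_output: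
  assumes "stochastic I {y} K"
  shows "eta_KL I {y} K = 0"
proof (rule antisym)
  show "eta_KL I {y} K \<le> 0"
  proof (rule eta_KL_le)
    fix P Q assume "is_dist I P" "is_dist I Q"
    then have "push I K P y = 1" "push I K Q y = 1"
      using is_dist_push[OF _ assms] by (auto simp: is_dist_def)
    then show "kl_div {y} (push I K P) (push I K Q) \<le> 0 * kl_div I P Q"
      by (simp add: kl_div_eq_sum_rel_entr)
  qed simp
qed (rule eta_KL_nonneg[OF assms], simp)

lemma stochastic_comp: "stochastic C Y \<kappa> \<Longrightarrow> (\<And>u. u \<in> F \<Longrightarrow> r u \<in> C) \<Longrightarrow> stochastic F Y (\<lambda>u. \<kappa> (r u))"
  by (simp add: stochastic_def)

lemma push_comp:
  assumes "finite C" "\<And>u. u \<in> F \<Longrightarrow> r u \<in> C"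
  shows "push C \<kappa> (push F (\<lambda>u c. if r u = c then 1 else 0) P) = push F (\<lambda>u. \<kappa> (r u)) P"
proof
  fix y
  have "push C \<kappa> (push F (\<lambda>u c. if r u = c then 1 else 0) P) y
      = (\<Sum>u\<in>F. \<Sum>c\<in>C. if r u = c then P u * \<kappa> c y else 0)"
    unfolding push_def by (subst sum.swap) (auto simp: sum_distrib_right intro!: sum.cong)
  also have "\<dots> = push F (\<lambda>u. \<kappa> (r u)) P y"
    unfolding push_def using assms by (intro sum.cong) auto
  finally show "push C \<kappa> (push F (\<lambda>u c. if r u = c then 1 else 0) P) y = push F (\<lambda>u. \<kappa> (r u)) P y" .
qed

text \<open>Factor the kernel through the deterministic kernel of r, which does not increase divergence.\<close>
lemma kl_div_push_comp_le:
  assumes "stochastic C Y \<kappa>" "finite Y" "finite C" "\<And>u. u \<in> F \<Longrightarrow> r u \<in> C"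
    and "is_dist F p" "is_dist F q" "abs_cont F p q"
  shows "kl_div Y (push F (\<lambda>u. \<kappa> (r u)) p) (push F (\<lambda>u. \<kappa> (r u)) q) \<le> eta_KL C Y \<kappa> * kl_div F p q"
proof -
  define \<delta> where "\<delta> = (\<lambda>u c. if r u = c then 1 else 0 :: real)"
  have \<delta>: "stochastic F C \<delta>"
    using assms(3,4) by (auto simp: stochastic_def is_dist_def \<delta>_def)
  have "kl_div Y (push F (\<lambda>u. \<kappa> (r u)) p) (push F (\<lambda>u. \<kappa> (r u)) q)
      = kl_div Y (push C \<kappa> (push F \<delta> p)) (push C \<kappa> (push F \<delta> q))"
    unfolding \<delta>_def using push_comp[of C F r \<kappa>] assms(3,4) by simp
  also have "\<dots> \<le> eta_KL C Y \<kappa> * kl_div C (push F \<delta> p) (push F \<delta> q)"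
    using assms(5-7) \<delta> assms(3)
    by (intro kl_div_push_le_eta_KL[OF assms(1,2)] is_dist_push abs_cont_push)
  also have "\<dots> \<le> eta_KL C Y \<kappa> * kl_div F p q"
    using kl_div_push_le[OF assms(5-7) \<delta> assms(3)] eta_KL_nonneg[OF assms(1,2)]
    by (rule mult_left_mono)
  finally show ?thesis .
qed

lemma sum_rel_entr_mult:
  assumes "is_dist Y s" "abs_cont Y s t" "0 < \<alpha>" "0 < \<beta>"
  shows "(\<Sum>y\<in>Y. rel_entr (\<alpha> * s y) (\<beta> * t y)) = \<alpha> * kl_div Y s t + rel_entr \<alpha> \<beta>"
proof -
  have "(\<Sum>y\<in>Y. rel_entr (\<alpha> * s y) (\<beta> * t y)) = (\<Sum>y\<in>Y. \<alpha> * rel_entr (s y) (t y) + s y * rel_entr \<alpha> \<beta>)"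
    using assms by (intro sum.cong refl rel_entr_mult) (auto simp: is_dist_def abs_cont_def)
  also have "\<dots> = \<alpha> * kl_div Y s t + rel_entr \<alpha> \<beta>"
    using assms(1)
    by (simp add: sum.distrib kl_div_eq_sum_rel_entr is_dist_def sum_distrib_left flip: sum_distrib_right)
  finally show ?thesis .
qed

text \<open>Normalising a and b to distributions p, q on F splits both sides into a scaled
  divergence between p and q plus the common term rel_entr (sum a) (sum b).\<close>
lemma rel_entr_mixture_le:
  assumes "finite F" "\<And>u. u \<in> F \<Longrightarrow> 0 \<le> a u" "\<And>u. u \<in> F \<Longrightarrow> 0 \<le> b u"
    and "\<And>u. u \<in> F \<Longrightarrow> 0 < a u \<Longrightarrow> 0 < b u"
    and "\<And>u. u \<in> F \<Longrightarrow> r u \<in> C" "stochastic C Y \<kappa>" "finite Y" "finite C"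
  shows "(\<Sum>y\<in>Y. rel_entr (\<Sum>u\<in>F. a u * \<kappa> (r u) y) (\<Sum>u\<in>F. b u * \<kappa> (r u) y))
    \<le> eta_KL C Y \<kappa> * (\<Sum>u\<in>F. rel_entr (a u) (b u))
      + (1 - eta_KL C Y \<kappa>) * rel_entr (\<Sum>u\<in>F. a u) (\<Sum>u\<in>F. b u)"
proof (cases "\<exists>u\<in>F. 0 < a u")
  case False
  with assms(2) have "\<And>u. u \<in> F \<Longrightarrow> a u = 0" by force
  then show ?thesis by simp
next
  case True
  define \<eta> where "\<eta> = eta_KL C Y \<kappa>"
  define \<alpha> where "\<alpha> = (\<Sum>u\<in>F. a u)"
  define \<beta> where "\<beta> = (\<Sum>u\<in>F. b u)"
  from True obtain j where "j \<in> F" "0 < a j" by blast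
  then have "0 < \<alpha>" "0 < \<beta>"
    using assms unfolding \<alpha>_def \<beta>_def by (auto intro!: sum_pos2[of F j])
  define p where "p u = a u / \<alpha>" for u
  define q where "q u = b u / \<beta>" for u
  have a: "a = (\<lambda>u. \<alpha> * p u)" and b: "b = (\<lambda>u. \<beta> * q u)"
    using \<open>0 < \<alpha>\<close> \<open>0 < \<beta>\<close> by (auto simp: p_def q_def)
  have p: "is_dist F p" and q: "is_dist F q"
    using assms(2,3) \<open>0 < \<alpha>\<close> \<open>0 < \<beta>\<close>
    by (auto simp: is_dist_def p_def q_def \<alpha>_def \<beta>_def simp flip: sum_divide_distrib)
  have pq: "abs_cont F p q"
    using assms(4) \<open>0 < \<alpha>\<close> \<open>0 < \<beta>\<close> by (auto simp: abs_cont_def p_def q_def zero_less_divide_iff)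
  define \<kappa>' where "\<kappa>' = (\<lambda>u. \<kappa> (r u))"
  have \<kappa>': "stochastic F Y \<kappa>'"
    unfolding \<kappa>'_def by (rule stochastic_comp[OF assms(6,5)])
  have mix: "(\<Sum>u\<in>F. a u * \<kappa> (r u) y) = \<alpha> * push F \<kappa>' p y"
    "(\<Sum>u\<in>F. b u * \<kappa> (r u) y) = \<beta> * push F \<kappa>' q y" for y
    unfolding a b push_def \<kappa>'_def by (simp_all add: sum_distrib_left mult.assoc)
  have "(\<Sum>y\<in>Y. rel_entr (\<Sum>u\<in>F. a u * \<kappa> (r u) y) (\<Sum>u\<in>F. b u * \<kappa> (r u) y))
      = \<alpha> * kl_div Y (push F \<kappa>' p) (push F \<kappa>' q) + rel_entr \<alpha> \<beta>"
    unfolding mix using \<open>0 < \<alpha>\<close> \<open>0 < \<beta>\<close>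
    by (intro sum_rel_entr_mult is_dist_push[OF p \<kappa>' assms(7)] abs_cont_push[OF p q pq \<kappa>'])
  also have "\<dots> \<le> \<alpha> * (\<eta> * kl_div F p q) + rel_entr \<alpha> \<beta>"
    using kl_div_push_comp_le[where F = F and r = r, OF assms(6-8,5) p q pq] \<open>0 < \<alpha>\<close>
    by (simp add: \<kappa>'_def \<eta>_def)
  also have "\<dots> = \<eta> * (\<alpha> * kl_div F p q + rel_entr \<alpha> \<beta>) + (1 - \<eta>) * rel_entr \<alpha> \<beta>"
    by (simp add: algebra_simps)
  also have "\<alpha> * kl_div F p q + rel_entr \<alpha> \<beta> = (\<Sum>u\<in>F. rel_entr (a u) (b u))"
    unfolding a b using p pq \<open>0 < \<alpha>\<close> \<open>0 < \<beta>\<close> by (simp add: sum_rel_entr_mult)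
  finally show ?thesis by (simp add: \<eta>_def \<alpha>_def \<beta>_def)
qed

lemma sum_PiE_insert:
  assumes "x \<notin> S"
  shows "(\<Sum>f\<in>PiE (insert x S) T. h f) = (\<Sum>b\<in>T x. \<Sum>g\<in>PiE S T. h (g(x := b)))"
proof -
  have "(\<Sum>f\<in>PiE (insert x S) T. h f) = (\<Sum>p\<in>T x \<times> PiE S T. h ((\<lambda>(y, g). g(x := y)) p))"
    unfolding PiE_insert_eq by (rule sum.reindex[OF inj_combinator[OF assms], unfolded comp_def])
  then show ?thesis by (simp add: sum.cartesian_product split_def)
qed

lemma sum_PiE_override_on:
  assumes "S \<subseteq> N"
  shows "(\<Sum>y\<in>PiE N A. f y) = (\<Sum>g\<in>PiE (N - S) A. \<Sum>h\<in>PiE S A. f (override_on g h S))"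
proof -
  have "bij_betw (\<lambda>(g, h). override_on g h S) (PiE (N - S) A \<times> PiE S A) (PiE N A)"
  proof (rule bij_betwI[where g = "\<lambda>y. (restrict y (N - S), restrict y S)"])
    show "(\<lambda>(g, h). override_on g h S) \<in> PiE (N - S) A \<times> PiE S A \<rightarrow> PiE N A"
      using assms by (auto simp: override_on_def PiE_def extensional_def)
    show "(\<lambda>y. (restrict y (N - S), restrict y S)) \<in> PiE N A \<rightarrow> PiE (N - S) A \<times> PiE S A"
      using assms by auto
  qed (use assms in \<open>auto simp: override_on_def fun_eq_iff PiE_def extensional_def\<close>)
  then have "(\<Sum>y\<in>PiE N A. f y) = (\<Sum>p\<in>PiE (N - S) A \<times> PiE S A. f ((\<lambda>(g, h). override_on g h S) p))"
    by (rule sum.reindex_bij_betw[symmetric])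
  then show ?thesis by (simp add: sum.cartesian_product split_def)
qed

lemma sum_PiE_group_restrict:
  assumes "V \<subseteq> U" "finite (PiE U A)" "finite (PiE V A)"
  shows "(\<Sum>v\<in>PiE V A. \<Sum>u\<in>{u\<in>PiE U A. restrict u V = v}. f u) = (\<Sum>u\<in>PiE U A. f u)"
  using assms by (intro sum.group) (auto simp: PiE_iff Int_absorb1)

lemma sum_restrict_group:
  assumes "V \<subseteq> U" "U \<subseteq> M" "finite (PiE M A)" "finite (PiE U A)"
  shows "(\<Sum>u\<in>{u\<in>PiE U A. restrict u V = w}. \<Sum>g\<in>{g\<in>PiE M A. restrict g U = u}. f g)
       = (\<Sum>g\<in>{g\<in>PiE M A. restrict g V = w}. f g)"
proof -
  have "{g\<in>PiE M A. restrict g U = u} = {g\<in>{g\<in>PiE M A. restrict g V = w}. restrict g U = u}"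
    if "restrict u V = w" for u
    using assms(1) that by (auto simp: Int_absorb1)
  then have "(\<Sum>u\<in>{u\<in>PiE U A. restrict u V = w}. \<Sum>g\<in>{g\<in>PiE M A. restrict g U = u}. f g)
      = (\<Sum>u\<in>{u\<in>PiE U A. restrict u V = w}. \<Sum>g\<in>{g\<in>{g\<in>PiE M A. restrict g V = w}. restrict g U = u}. f g)"
    by (intro sum.cong) auto
  also have "\<dots> = (\<Sum>g\<in>{g\<in>PiE M A. restrict g V = w}. f g)"
  proof (rule sum.group)
    show "(\<lambda>g. restrict g U) ` {g\<in>PiE M A. restrict g V = w} \<subseteq> {u\<in>PiE U A. restrict u V = w}"
      using assms(1,2) by (auto simp: PiE_iff Int_absorb1)
  qed (use assms(3,4) in auto)
  finally show ?thesis .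
qed

lemma sum_PiE_insert_restrict:
  assumes "W \<notin> M" "V \<subseteq> M" "z \<in> PiE (insert W V) A"
  shows "(\<Sum>y\<in>{y\<in>PiE (insert W M) A. restrict y (insert W V) = z}. f y)
       = (\<Sum>g\<in>{g\<in>PiE M A. restrict g V = restrict z V}. f (g(W := z W)))"
proof (rule sum.reindex_bij_betw[symmetric], rule bij_betwI[where g = "\<lambda>y. y(W := undefined)"])
  show "(\<lambda>g. g(W := z W)) \<in> {g\<in>PiE M A. restrict g V = restrict z V}
      \<rightarrow> {y\<in>PiE (insert W M) A. restrict y (insert W V) = z}"
    using assms by (auto simp: PiE_iff restrict_def fun_eq_iff extensional_def split: if_splits)
  show "(\<lambda>y. y(W := undefined)) \<in> {y\<in>PiE (insert W M) A. restrict y (insert W V) = z}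
      \<rightarrow> {g\<in>PiE M A. restrict g V = restrict z V}"
    using assms by (auto simp: PiE_iff restrict_def fun_eq_iff extensional_def)
next
  fix y assume "y \<in> {y\<in>PiE (insert W M) A. restrict y (insert W V) = z}"
  then have "y \<in> PiE (insert W M) A" "z W = y W" by auto
  then show "(y(W := undefined))(W := z W) = y" by auto
qed (use assms in \<open>auto simp: PiE_iff restrict_def fun_eq_iff extensional_def\<close>)

definition site_weight :: "('n \<Rightarrow> real) \<Rightarrow> 'n set \<Rightarrow> 'n set \<Rightarrow> real" where
  "site_weight p M S = (\<Prod>v\<in>S. p v) * (\<Prod>v\<in>M - S. 1 - p v)"

lemma sum_site_weight: "finite M \<Longrightarrow> (\<Sum>S\<in>Pow M. site_weight p M S) = 1"
  unfolding site_weight_def using prod_add[of M p "\<lambda>v. 1 - p v"] by simp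

lemma site_weight_nonneg:
  "S \<subseteq> M \<Longrightarrow> (\<And>v. v \<in> M \<Longrightarrow> 0 \<le> p v \<and> p v \<le> 1) \<Longrightarrow> 0 \<le> site_weight p M S"
  unfolding site_weight_def by (intro mult_nonneg_nonneg prod_nonneg) auto

lemma site_weight_empty_pos:
  "finite M \<Longrightarrow> (\<And>v. v \<in> M \<Longrightarrow> p v < 1) \<Longrightarrow> 0 < site_weight p M {}"
  unfolding site_weight_def by (simp add: prod_pos)

lemma sum_site_weight_insert:
  assumes "finite M" "W \<notin> M"
  shows "(\<Sum>S\<in>Pow (insert W M). site_weight p (insert W M) S * f S)
       = (\<Sum>S\<in>Pow M. site_weight p M S * ((1 - p W) * f S + p W * f (insert W S)))"
proof -
  have weight: "site_weight p (insert W M) S = (1 - p W) * site_weight p M S"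
    "site_weight p (insert W M) (insert W S) = p W * site_weight p M S" if "S \<in> Pow M" for S
  proof -
    have "finite S" "W \<notin> S" "insert W M - S = insert W (M - S)" "insert W M - insert W S = M - S"
      using that assms finite_subset by auto
    then show "site_weight p (insert W M) S = (1 - p W) * site_weight p M S"
      "site_weight p (insert W M) (insert W S) = p W * site_weight p M S"
      using assms by (simp_all add: site_weight_def)
  qed
  have "inj_on (insert W) (Pow M)"
    using assms(2) by (auto simp: inj_on_def)
  then have "(\<Sum>S\<in>insert W ` Pow M. site_weight p (insert W M) S * f S)
      = (\<Sum>S\<in>Pow M. site_weight p (insert W M) (insert W S) * f (insert W S))"
    by (rule sum.reindex[unfolded comp_def])
  moreover have "(\<Sum>S\<in>Pow (insert W M). site_weight p (insert W M) S * f S)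
      = (\<Sum>S\<in>Pow M. site_weight p (insert W M) S * f S)
        + (\<Sum>S\<in>insert W ` Pow M. site_weight p (insert W M) S * f S)"
    unfolding Pow_insert using assms by (intro sum.union_disjoint) auto
  ultimately have "(\<Sum>S\<in>Pow (insert W M). site_weight p (insert W M) S * f S)
      = (\<Sum>S\<in>Pow M. site_weight p (insert W M) S * f S
           + site_weight p (insert W M) (insert W S) * f (insert W S))"
    by (simp add: sum.distrib)
  also have "\<dots> = (\<Sum>S\<in>Pow M. site_weight p M S * ((1 - p W) * f S + p W * f (insert W S)))"
    by (intro sum.cong refl) (simp add: weight algebra_simps)
  finally show ?thesis .
qed

locale bayesian_network =
  fixes N :: "'n set" and E :: "('n \<times> 'n) set" and x0 :: 'n
    and A :: "'n \<Rightarrow> 'a set" and K :: "'n \<Rightarrow> ('n \<Rightarrow> 'a) \<Rightarrow> 'a \<Rightarrow> real"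
    and ord :: "'n \<Rightarrow> nat"
  assumes bayes_net: "bayes_net N E x0 A K ord"
begin

lemma finite_nodes: "finite N"
  and source_node: "x0 \<in> N"
  and edges_subset: "E \<subseteq> N \<times> N"
  and no_edge_into_source: "(u, x0) \<notin> E"
  and finite_alphabet: "v \<in> N \<Longrightarrow> finite (A v)"
  and is_dist_K: "v \<in> N - {x0} \<Longrightarrow> p \<in> PiE (parents E v) A \<Longrightarrow> is_dist (A v) (K v p)"
  and inj_on_ord: "inj_on ord N"
  and ord_edge: "(u, v) \<in> E \<Longrightarrow> ord u < ord v"
  using bayes_net unfolding bayes_net_def is_dist_def by auto

lemma parents_subset: "parents E v \<subseteq> N"
  using edges_subset by (auto simp: parents_def)

lemma ord_parent: "u \<in> parents E v \<Longrightarrow> ord u < ord v"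
  using ord_edge by (auto simp: parents_def)

lemma finite_PiE_nodes: "V \<subseteq> N \<Longrightarrow> finite (PiE V A)"
  using finite_nodes finite_alphabet by (intro finite_PiE) (auto intro: finite_subset)

lemma stochastic_K: "v \<in> N - {x0} \<Longrightarrow> stochastic (PiE (parents E v) A) (A v) (K v)"
  using is_dist_K by (auto simp: stochastic_def)

lemma K_nonneg:
  "v \<in> N - {x0} \<Longrightarrow> (\<And>u. u \<in> parents E v \<Longrightarrow> y u \<in> A u) \<Longrightarrow> b \<in> A v
    \<Longrightarrow> 0 \<le> K v (restrict y (parents E v)) b"
  using is_dist_K[of v "restrict y (parents E v)"] by (auto simp: is_dist_def)

lemma sum_K_eq_1:
  "v \<in> N - {x0} \<Longrightarrow> (\<And>u. u \<in> parents E v \<Longrightarrow> y u \<in> A u)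
    \<Longrightarrow> (\<Sum>b\<in>A v. K v (restrict y (parents E v)) b) = 1"
  using is_dist_K[of v "restrict y (parents E v)"] by (auto simp: is_dist_def)

lemma ex_ord_max:
  assumes "V \<subseteq> N" "V \<noteq> {}"
  obtains W where "W \<in> V" "\<And>v. v \<in> V - {W} \<Longrightarrow> ord v < ord W"
proof -
  have fin: "finite (ord ` V)" using assms(1) finite_nodes finite_subset by blast
  then have "Max (ord ` V) \<in> ord ` V" using assms(2) by (intro Max_in) auto
  then obtain W where W: "W \<in> V" "ord W = Max (ord ` V)" by (metis imageE)
  have "ord v < ord W" if v: "v \<in> V - {W}" for v
  proof -
    have "v \<noteq> W" "v \<in> N" "W \<in> N" using v W(1) assms(1) by auto
    then have "ord v \<noteq> ord W" using inj_on_ord by (meson inj_onD)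
    moreover have "ord v \<le> ord W" unfolding W(2) using fin v by (intro Max_ge) auto
    ultimately show ?thesis by simp
  qed
  with W(1) show ?thesis by (rule that)
qed

definition kernel_prod :: "'n set \<Rightarrow> ('n \<Rightarrow> 'a) \<Rightarrow> real" where
  "kernel_prod S y = (\<Prod>v\<in>S. K v (restrict y (parents E v)) (y v))"

lemma kernel_prod_cong:
  assumes "\<And>v. v \<in> S \<Longrightarrow> y v = y' v" "\<And>u v. v \<in> S \<Longrightarrow> u \<in> parents E v \<Longrightarrow> y u = y' u"
  shows "kernel_prod S y = kernel_prod S y'"
  unfolding kernel_prod_def
proof (rule prod.cong[OF refl])
  fix v assume "v \<in> S"
  then have "restrict y (parents E v) = restrict y' (parents E v)"
    using assms(2) by (auto simp: restrict_def)
  then show "K v (restrict y (parents E v)) (y v) = K v (restrict y' (parents E v)) (y' v)"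
    using assms(1) \<open>v \<in> S\<close> by simp
qed

lemma kernel_prod_nonneg:
  "S \<subseteq> N - {x0} \<Longrightarrow> y \<in> PiE N A \<Longrightarrow> 0 \<le> kernel_prod S y"
  unfolding kernel_prod_def using parents_subset
  by (intro prod_nonneg K_nonneg) (auto simp: PiE_iff)

lemma kernel_prod_insert_sink:
  assumes "finite S" "m \<notin> S" "\<And>v. v \<in> S \<Longrightarrow> m \<notin> parents E v"
  shows "kernel_prod (insert m S) (y(m := b)) = K m (restrict y (parents E m)) b * kernel_prod S y"
proof -
  have "m \<notin> parents E m" using ord_parent by blast
  then have "restrict (y(m := b)) (parents E m) = restrict y (parents E m)"
    by (auto simp: restrict_def)
  moreover have "kernel_prod S (y(m := b)) = kernel_prod S y"
    using assms(2,3) by (intro kernel_prod_cong) auto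
  ultimately show ?thesis
    using assms(1,2) by (simp add: kernel_prod_def)
qed

lemma sum_kernel_prod_insert_sink:
  assumes "finite S" "m \<in> N - {x0}" "m \<notin> S" "\<And>v. v \<in> S \<Longrightarrow> m \<notin> parents E v"
    and "\<And>u. u \<in> parents E m \<Longrightarrow> u \<notin> S \<Longrightarrow> g u \<in> A u"
  shows "(\<Sum>h\<in>PiE (insert m S) A. kernel_prod (insert m S) (override_on g h (insert m S)))
       = (\<Sum>h\<in>PiE S A. kernel_prod S (override_on g h S))"
proof -
  have "(\<Sum>h\<in>PiE (insert m S) A. kernel_prod (insert m S) (override_on g h (insert m S)))
      = (\<Sum>b\<in>A m. \<Sum>h\<in>PiE S A.
           K m (restrict (override_on g h S) (parents E m)) b * kernel_prod S (override_on g h S))"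
  proof (unfold sum_PiE_insert[OF assms(3)], intro sum.cong refl)
    fix b h
    have "override_on g (h(m := b)) (insert m S) = (override_on g h S)(m := b)"
      by (auto simp: override_on_def)
    then show "kernel_prod (insert m S) (override_on g (h(m := b)) (insert m S))
        = K m (restrict (override_on g h S) (parents E m)) b * kernel_prod S (override_on g h S)"
      by (simp only: kernel_prod_insert_sink[OF assms(1,3,4)])
  qed
  also have "\<dots> = (\<Sum>h\<in>PiE S A.
      (\<Sum>b\<in>A m. K m (restrict (override_on g h S) (parents E m)) b) * kernel_prod S (override_on g h S))"
    by (subst sum.swap) (simp add: sum_distrib_right)
  also have "\<dots> = (\<Sum>h\<in>PiE S A. kernel_prod S (override_on g h S))"
  proof (intro sum.cong refl)
    fix h assume "h \<in> PiE S A"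
    then have "(\<Sum>b\<in>A m. K m (restrict (override_on g h S) (parents E m)) b) = 1"
      using assms(2,5) by (intro sum_K_eq_1) (auto simp: override_on_def)
    then show "(\<Sum>b\<in>A m. K m (restrict (override_on g h S) (parents E m)) b) * kernel_prod S (override_on g h S)
        = kernel_prod S (override_on g h S)" by simp
  qed
  finally show ?thesis .
qed

lemma sum_kernel_prod_eq_1:
  assumes "S \<subseteq> N - {x0}" "\<And>u v. v \<in> S \<Longrightarrow> u \<in> parents E v \<Longrightarrow> u \<notin> S \<Longrightarrow> g u \<in> A u"
  shows "(\<Sum>h\<in>PiE S A. kernel_prod S (override_on g h S)) = 1"
proof -
  have "finite S" using assms(1) finite_nodes finite_subset by blast
  from this assms show ?thesis
  proof (induction rule: finite_psubset_induct)
    case (psubset S)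
    show ?case
    proof (cases "S = {}")
      case False
      then obtain m where m: "m \<in> S" "\<And>v. v \<in> S - {m} \<Longrightarrow> ord v < ord m"
        using ex_ord_max[of S] psubset.prems(1) by blast
      have sink: "m \<notin> parents E v" if "v \<in> S" for v
        using m that ord_parent by (cases "v = m") force+
      define S' where "S' = S - {m}"
      have S: "S = insert m S'" "m \<notin> S'" using m(1) by (auto simp: S'_def)
      have "(\<Sum>h\<in>PiE S A. kernel_prod S (override_on g h S))
          = (\<Sum>h\<in>PiE S' A. kernel_prod S' (override_on g h S'))"
      proof (unfold S(1), rule sum_kernel_prod_insert_sink)
        show "finite S'" using psubset.hyps(1) by (simp add: S'_def)
        show "m \<in> N - {x0}" using psubset.prems(1) m(1) by blast
        show "g u \<in> A u" if "u \<in> parents E m" "u \<notin> S'" for u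
          using psubset.prems(2)[OF m(1) that(1)] that ord_parent[OF that(1)] by (auto simp: S'_def)
      qed (use S sink in auto)
      also have "\<dots> = 1"
      proof (rule psubset.IH)
        show "S' \<subset> S" "S' \<subseteq> N - {x0}" using m(1) psubset.prems(1) by (auto simp: S'_def)
        show "g u \<in> A u" if "v \<in> S'" "u \<in> parents E v" "u \<notin> S'" for u v
          using psubset.prems(2)[of v u] sink[of v] that by (auto simp: S'_def)
      qed
      finally show ?thesis .
    qed (simp add: kernel_prod_def)
  qed
qed

definition joint_on :: "'n set \<Rightarrow> 'a \<Rightarrow> ('n \<Rightarrow> 'a) \<Rightarrow> real" where
  "joint_on M x y = (if y x0 = x then 1 else 0) * kernel_prod (M - {x0}) y"

abbreviation kernel_X :: "'n set \<Rightarrow> 'a \<Rightarrow> ('n \<Rightarrow> 'a) \<Rightarrow> real" where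
  "kernel_X \<equiv> induced_kernel N E x0 A K"

lemma kernel_X_eq: "kernel_X T x z = (\<Sum>y\<in>{y\<in>PiE N A. restrict y T = z}. joint_on N x y)"
  unfolding induced_kernel_def joint_def joint_on_def kernel_prod_def ..

lemma joint_on_nonneg: "y \<in> PiE N A \<Longrightarrow> 0 \<le> joint_on N x y"
  unfolding joint_on_def by (simp add: kernel_prod_nonneg)

text \<open>S is closed under taking children, so the factors outside S do not see the values on S.\<close>
lemma joint_on_override_on:
  assumes "S \<subseteq> N - {x0}" "E `` S \<subseteq> S"
  shows "joint_on N x (override_on g h S)
       = joint_on (N - S) x g * kernel_prod S (override_on g h S)"
proof -
  have fin: "finite (N - S - {x0})" "finite S"
    using finite_nodes assms(1) finite_subset by auto
  have "N - {x0} = (N - S - {x0}) \<union> S" using assms(1) by auto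
  then have split: "kernel_prod (N - {x0}) y = kernel_prod (N - S - {x0}) y * kernel_prod S y" for y
    unfolding kernel_prod_def using fin by (subst prod.union_disjoint[symmetric]) auto
  have outside: "kernel_prod (N - S - {x0}) (override_on g h S) = kernel_prod (N - S - {x0}) g"
  proof (rule kernel_prod_cong)
    show "override_on g h S u = g u" if "v \<in> N - S - {x0}" "u \<in> parents E v" for u v
      using assms(2) that by (auto simp: parents_def override_on_def)
  qed simp
  have "override_on g h S x0 = g x0" using assms(1) by (auto simp: override_on_def)
  then show ?thesis unfolding joint_on_def by (simp only: split outside mult.assoc)
qed

lemma kernel_X_eq_sum_joint_on:
  assumes "S \<subseteq> N - {x0}" "E `` S \<subseteq> S" "T \<inter> S = {}"
  shows "kernel_X T x z = (\<Sum>y\<in>{y\<in>PiE (N - S) A. restrict y T = z}. joint_on (N - S) x y)"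
proof -
  have restrict_eq: "restrict (override_on g h S) T = restrict g T" for g h
    using assms(3) by (auto simp: restrict_def override_on_def fun_eq_iff)
  have "kernel_X T x z = (\<Sum>y\<in>PiE N A. if restrict y T = z then joint_on N x y else 0)"
    unfolding kernel_X_eq using finite_PiE_nodes[of N] by (simp add: sum.inter_filter)
  also have "\<dots> = (\<Sum>g\<in>PiE (N - S) A. \<Sum>h\<in>PiE S A.
      if restrict (override_on g h S) T = z then joint_on N x (override_on g h S) else 0)"
    using assms(1) by (intro sum_PiE_override_on) auto
  also have "\<dots> = (\<Sum>g\<in>PiE (N - S) A. (if restrict g T = z then joint_on (N - S) x g else 0)
                     * (\<Sum>h\<in>PiE S A. kernel_prod S (override_on g h S)))"
    unfolding restrict_eq sum_distrib_left
    by (intro sum.cong refl) (simp add: joint_on_override_on[OF assms(1,2)])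
  also have "\<dots> = (\<Sum>g\<in>PiE (N - S) A. if restrict g T = z then joint_on (N - S) x g else 0)"
  proof (intro sum.cong refl)
    fix g assume g: "g \<in> PiE (N - S) A"
    have "(\<Sum>h\<in>PiE S A. kernel_prod S (override_on g h S)) = 1"
    proof (rule sum_kernel_prod_eq_1[OF assms(1)])
      show "g u \<in> A u" if "u \<in> parents E v" "u \<notin> S" for u v
        using g that parents_subset by (auto simp: PiE_iff)
    qed
    then show "(if restrict g T = z then joint_on (N - S) x g else 0)
        * (\<Sum>h\<in>PiE S A. kernel_prod S (override_on g h S))
        = (if restrict g T = z then joint_on (N - S) x g else 0)" by simp
  qed
  also have "\<dots> = (\<Sum>y\<in>{y\<in>PiE (N - S) A. restrict y T = z}. joint_on (N - S) x y)"
    using finite_PiE_nodes[of "N - S"] by (simp add: sum.inter_filter)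
  finally show ?thesis .
qed

lemma sum_joint_on_eq_1:
  assumes "x \<in> A x0"
  shows "(\<Sum>y\<in>PiE N A. joint_on N x y) = 1"
proof -
  have "(\<Sum>y\<in>PiE N A. joint_on N x y) = kernel_X {} x (\<lambda>_. undefined)"
    unfolding kernel_X_eq by (simp add: restrict_def)
  also have "\<dots> = (\<Sum>y\<in>{y\<in>PiE (N - (N - {x0})) A. restrict y {} = (\<lambda>_. undefined)}.
                     joint_on (N - (N - {x0})) x y)"
    using no_edge_into_source edges_subset by (intro kernel_X_eq_sum_joint_on) auto
  also have "\<dots> = (\<Sum>y\<in>PiE {x0} A. if y x0 = x then 1 else 0)"
  proof -
    have "N - (N - {x0}) = {x0}" using source_node by auto
    then show ?thesis by (simp add: joint_on_def kernel_prod_def restrict_def)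
  qed
  also have "\<dots> = 1"
    using sum_PiE_insert[where x = x0 and S = "{}" and T = A and h = "\<lambda>y. if y x0 = x then 1 else 0"]
      finite_alphabet[OF source_node] assms
    by simp
  finally show ?thesis .
qed

lemma is_dist_kernel_X:
  assumes "x \<in> A x0" "T \<subseteq> N"
  shows "is_dist (PiE T A) (kernel_X T x)"
proof -
  have "(\<Sum>z\<in>PiE T A. kernel_X T x z) = (\<Sum>y\<in>PiE N A. joint_on N x y)"
    unfolding kernel_X_eq using finite_PiE_nodes[OF assms(2)] finite_PiE_nodes[of N] assms(2)
    by (intro sum_PiE_group_restrict) auto
  then show ?thesis
    unfolding is_dist_def using sum_joint_on_eq_1[OF assms(1)]
    by (auto simp: kernel_X_eq intro!: sum_nonneg joint_on_nonneg)
qed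

lemma stochastic_kernel_X: "T \<subseteq> N \<Longrightarrow> stochastic (A x0) (PiE T A) (kernel_X T)"
  using is_dist_kernel_X by (auto simp: stochastic_def)

lemma kernel_X_marginal:
  assumes "V \<subseteq> U" "U \<subseteq> N"
  shows "kernel_X V x v = (\<Sum>u\<in>{u\<in>PiE U A. restrict u V = v}. kernel_X U x u)"
  unfolding kernel_X_eq using assms finite_PiE_nodes[OF assms(2)] finite_PiE_nodes[of N]
  by (intro sum_restrict_group[symmetric]) auto

lemma joint_on_insert_sink:
  assumes "finite M" "W \<in> N - {x0}" "W \<notin> M" "\<And>v. v \<in> M \<Longrightarrow> W \<notin> parents E v"
  shows "joint_on (insert W M) x (g(W := b)) = joint_on M x g * K W (restrict g (parents E W)) b"
proof -
  have "insert W M - {x0} = insert W (M - {x0})" using assms(2) by auto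
  moreover have "kernel_prod (insert W (M - {x0})) (g(W := b))
      = K W (restrict g (parents E W)) b * kernel_prod (M - {x0}) g"
    using assms by (intro kernel_prod_insert_sink) auto
  moreover have "(g(W := b)) x0 = g x0" using assms(2) by auto
  ultimately show ?thesis unfolding joint_on_def by simp
qed

text \<open>Marginalising out every node above W leaves W as a sink whose factor can be split off.\<close>
lemma kernel_X_insert:
  assumes W: "W \<in> N - {x0}" "V \<subseteq> N" "W \<notin> V" "\<forall>v\<in>V. ord v < ord W"
    and z: "z \<in> PiE (insert W V) A"
  shows "kernel_X (insert W V) x z =
    (\<Sum>u\<in>{u\<in>PiE (V \<union> parents E W) A. restrict u V = restrict z V}.
        kernel_X (V \<union> parents E W) x u * K W (restrict u (parents E W)) (z W))"
proof -
  define U where "U = V \<union> parents E W"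
  define D where "D = {v\<in>N - {x0}. ord W < ord v}"
  define M where "M = N - insert W D"
  define G where "G = {g\<in>PiE M A. restrict g V = restrict z V}"
  have closed: "E `` D \<subseteq> D" "E `` insert W D \<subseteq> insert W D"
    using edges_subset no_edge_into_source ord_edge by (fastforce simp: D_def)+
  have "U \<subseteq> M"
    using W ord_parent parents_subset by (fastforce simp: U_def M_def D_def)
  have sink: "W \<notin> parents E v" if "v \<in> M" for v
    using that ord_parent[of W v] edges_subset no_edge_into_source
    by (auto simp: M_def D_def parents_def)
  have M: "finite M" "W \<notin> M" "V \<subseteq> M" "N - D = insert W M"
    using W finite_nodes by (auto simp: M_def D_def)
  have "kernel_X (insert W V) x z
      = (\<Sum>y\<in>{y\<in>PiE (N - D) A. restrict y (insert W V) = z}. joint_on (N - D) x y)"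
    by (rule kernel_X_eq_sum_joint_on) (use closed(1) W in \<open>auto simp: D_def\<close>)
  also have "\<dots> = (\<Sum>y\<in>{y\<in>PiE (insert W M) A. restrict y (insert W V) = z}. joint_on (insert W M) x y)"
    unfolding M(4) ..
  also have "\<dots> = (\<Sum>g\<in>G. joint_on (insert W M) x (g(W := z W)))"
    unfolding G_def using M(2,3) z by (rule sum_PiE_insert_restrict)
  also have "\<dots> = (\<Sum>g\<in>G. joint_on M x g * K W (restrict g (parents E W)) (z W))"
    using M(1,2) W(1) sink by (simp add: joint_on_insert_sink)
  also have "\<dots> = (\<Sum>u\<in>{u\<in>PiE U A. restrict u V = restrict z V}. \<Sum>g\<in>{g\<in>PiE M A. restrict g U = u}.
                       joint_on M x g * K W (restrict g (parents E W)) (z W))"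
    unfolding G_def using \<open>U \<subseteq> M\<close> finite_PiE_nodes[of M] finite_PiE_nodes[of U] W(2) parents_subset
    by (intro sum_restrict_group[symmetric]) (auto simp: U_def M_def)
  also have "\<dots> = (\<Sum>u\<in>{u\<in>PiE U A. restrict u V = restrict z V}.
                       kernel_X U x u * K W (restrict u (parents E W)) (z W))"
  proof (intro sum.cong refl)
    fix u
    have "kernel_X U x u = (\<Sum>g\<in>{g\<in>PiE M A. restrict g U = u}. joint_on M x g)"
      unfolding M_def
      by (rule kernel_X_eq_sum_joint_on) (use closed(2) W \<open>U \<subseteq> M\<close> in \<open>auto simp: D_def M_def\<close>)
    moreover have "restrict g (parents E W) = restrict u (parents E W)" if "restrict g U = u" for g
      using that by (auto simp: U_def restrict_def fun_eq_iff) metis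
    ultimately show "(\<Sum>g\<in>{g\<in>PiE M A. restrict g U = u}. joint_on M x g * K W (restrict g (parents E W)) (z W))
        = kernel_X U x u * K W (restrict u (parents E W)) (z W)"
      by (simp add: sum_distrib_right)
  qed
  finally show ?thesis by (simp add: U_def)
qed

abbreviation eta_of :: "'n set \<Rightarrow> real" where
  "eta_of \<equiv> eta_set N E x0 A K"

abbreviation eta_at :: "'n \<Rightarrow> real" where
  "eta_at \<equiv> eta_node E A K"

lemma eta_at_eq:
  assumes "v \<in> N - {x0}"
  shows "eta_at v = eta_KL (PiE (parents E v) A) (A v) (K v)"
proof (cases "parents E v = {}")
  case True
  then have "stochastic {\<lambda>_. undefined} (A v) (K v)"
    using stochastic_K[OF assms] by simp
  then have "eta_KL {\<lambda>_. undefined} (A v) (K v) = 0"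
    using finite_alphabet assms by (intro eta_KL_singleton_input) auto
  then show ?thesis using True by (simp add: eta_node_def)
qed (simp add: eta_node_def)

lemma eta_at_nonneg: "v \<in> N - {x0} \<Longrightarrow> 0 \<le> eta_at v"
  by (simp add: eta_at_eq eta_KL_nonneg stochastic_K finite_alphabet)

lemma eta_at_le_1: "v \<in> N - {x0} \<Longrightarrow> eta_at v \<le> 1"
  by (simp add: eta_at_eq eta_KL_le_1 stochastic_K finite_alphabet)

lemma eta_of_nonneg: "V \<subseteq> N \<Longrightarrow> 0 \<le> eta_of V"
  unfolding eta_set_def by (simp add: eta_KL_nonneg stochastic_kernel_X finite_PiE_nodes)

lemma eta_of_le_1: "V \<subseteq> N \<Longrightarrow> eta_of V \<le> 1"
  unfolding eta_set_def by (simp add: eta_KL_le_1 stochastic_kernel_X finite_PiE_nodes)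

lemma eta_of_empty: "eta_of {} = 0"
  unfolding eta_set_def using stochastic_kernel_X[of "{}"]
  by (simp add: eta_KL_singleton_output)

abbreviation law :: "'n set \<Rightarrow> ('a \<Rightarrow> real) \<Rightarrow> ('n \<Rightarrow> 'a) \<Rightarrow> real" where
  "law V R \<equiv> push (A x0) (kernel_X V) R"

lemma law_marginal:
  assumes "V \<subseteq> U" "U \<subseteq> N"
  shows "law V R v = (\<Sum>u\<in>{u\<in>PiE U A. restrict u V = v}. law U R u)"
  unfolding push_def kernel_X_marginal[OF assms]
  by (simp add: sum_distrib_left sum.swap[of _ "A x0"])

lemma law_insert:
  assumes "W \<in> N - {x0}" "V \<subseteq> N" "W \<notin> V" "\<forall>v\<in>V. ord v < ord W"
    and "z \<in> PiE (insert W V) A"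
  shows "law (insert W V) R z =
    (\<Sum>u\<in>{u\<in>PiE (V \<union> parents E W) A. restrict u V = restrict z V}.
        law (V \<union> parents E W) R u * K W (restrict u (parents E W)) (z W))"
  unfolding push_def kernel_X_insert[OF assms]
  by (simp add: sum_distrib_left sum_distrib_right mult.assoc sum.swap[of _ "A x0"])

lemma kl_div_law_insert_le:
  assumes W: "W \<in> N - {x0}" "V \<subseteq> N" "W \<notin> V" "\<forall>v\<in>V. ord v < ord W"
    and PQ: "is_dist (A x0) P" "is_dist (A x0) Q" "abs_cont (A x0) P Q"
  shows "kl_div (PiE (insert W V) A) (law (insert W V) P) (law (insert W V) Q)
    \<le> eta_at W * kl_div (PiE (V \<union> parents E W) A) (law (V \<union> parents E W) P) (law (V \<union> parents E W) Q)
      + (1 - eta_at W) * kl_div (PiE V A) (law V P) (law V Q)"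
proof -
  define U where "U = V \<union> parents E W"
  define F where "F v = {u\<in>PiE U A. restrict u V = v}" for v
  define r where "r u = restrict u (parents E W)" for u :: "'n \<Rightarrow> 'a"
  have U: "U \<subseteq> N" "V \<subseteq> U" using W parents_subset by (auto simp: U_def)
  have dist: "is_dist (PiE U A) (law U P)" "is_dist (PiE U A) (law U Q)"
    and ac: "abs_cont (PiE U A) (law U P) (law U Q)"
    using PQ stochastic_kernel_X[OF U(1)] finite_PiE_nodes[OF U(1)]
    by (auto intro: is_dist_push abs_cont_push)
  have "kl_div (PiE (insert W V) A) (law (insert W V) P) (law (insert W V) Q)
      = (\<Sum>v\<in>PiE V A. \<Sum>b\<in>A W. rel_entr (\<Sum>u\<in>F v. law U P u * K W (r u) b)
                                          (\<Sum>u\<in>F v. law U Q u * K W (r u) b))"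
    unfolding kl_div_eq_sum_rel_entr sum_PiE_insert[OF W(3)]
  proof (subst sum.swap, intro sum.cong refl)
    fix v b assume "v \<in> PiE V A" "b \<in> A W"
    moreover from this have "restrict (v(W := b)) V = v"
      using W(3) by (auto simp: restrict_def fun_eq_iff PiE_iff extensional_def)
    ultimately show "rel_entr (law (insert W V) P (v(W := b))) (law (insert W V) Q (v(W := b)))
        = rel_entr (\<Sum>u\<in>F v. law U P u * K W (r u) b) (\<Sum>u\<in>F v. law U Q u * K W (r u) b)"
      by (simp add: law_insert[OF W] PiE_fun_upd U_def F_def r_def)
  qed
  also have "\<dots> \<le> (\<Sum>v\<in>PiE V A. eta_at W * (\<Sum>u\<in>F v. rel_entr (law U P u) (law U Q u))
      + (1 - eta_at W) * rel_entr (\<Sum>u\<in>F v. law U P u) (\<Sum>u\<in>F v. law U Q u))"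
    unfolding eta_at_eq[OF W(1)]
  proof (intro sum_mono rel_entr_mixture_le)
    show "r u \<in> PiE (parents E W) A" if "u \<in> F v" for u v
      using that by (auto simp: r_def F_def U_def PiE_iff)
  qed (use dist ac finite_PiE_nodes[OF U(1)] stochastic_K[OF W(1)] finite_alphabet W(1)
        finite_PiE_nodes[OF parents_subset] in \<open>auto simp: F_def is_dist_def abs_cont_def\<close>)
  also have "\<dots> = eta_at W * kl_div (PiE U A) (law U P) (law U Q)
      + (1 - eta_at W) * kl_div (PiE V A) (law V P) (law V Q)"
  proof -
    have "(\<Sum>v\<in>PiE V A. \<Sum>u\<in>F v. rel_entr (law U P u) (law U Q u)) = kl_div (PiE U A) (law U P) (law U Q)"
      unfolding kl_div_eq_sum_rel_entr F_def
      using U(2) finite_PiE_nodes[OF U(1)] finite_PiE_nodes[OF W(2)] by (rule sum_PiE_group_restrict)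
    moreover have "(\<Sum>v\<in>PiE V A. rel_entr (\<Sum>u\<in>F v. law U P u) (\<Sum>u\<in>F v. law U Q u))
        = kl_div (PiE V A) (law V P) (law V Q)"
      unfolding kl_div_eq_sum_rel_entr F_def law_marginal[OF U(2,1)] ..
    ultimately show ?thesis by (simp add: sum.distrib flip: sum_distrib_left)
  qed
  finally show ?thesis by (simp add: U_def)
qed

lemma kl_div_law_le_eta_of:
  "V \<subseteq> N \<Longrightarrow> is_dist (A x0) P \<Longrightarrow> is_dist (A x0) Q \<Longrightarrow> abs_cont (A x0) P Q
    \<Longrightarrow> kl_div (PiE V A) (law V P) (law V Q) \<le> eta_of V * kl_div (A x0) P Q"
  unfolding eta_set_def
  by (intro kl_div_push_le_eta_KL stochastic_kernel_X finite_PiE_nodes)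

lemma eta_of_insert_le:
  assumes W: "W \<in> N - {x0}" "V \<subseteq> N" "W \<notin> V" "\<forall>v\<in>V. ord v < ord W"
  shows "eta_of (insert W V) \<le> eta_at W * eta_of (V \<union> parents E W) + (1 - eta_at W) * eta_of V"
  unfolding eta_set_def[of N E x0 A K "insert W V"]
proof (rule eta_KL_le)
  have U: "V \<union> parents E W \<subseteq> N" using W(2) parents_subset by blast
  show "0 \<le> eta_at W * eta_of (V \<union> parents E W) + (1 - eta_at W) * eta_of V"
    using eta_at_nonneg[OF W(1)] eta_at_le_1[OF W(1)] eta_of_nonneg[OF U] eta_of_nonneg[OF W(2)]
    by simp
  fix P Q assume PQ: "is_dist (A x0) P" "is_dist (A x0) Q" "abs_cont (A x0) P Q"
  have "kl_div (PiE (insert W V) A) (law (insert W V) P) (law (insert W V) Q)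
      \<le> eta_at W * kl_div (PiE (V \<union> parents E W) A) (law (V \<union> parents E W) P) (law (V \<union> parents E W) Q)
        + (1 - eta_at W) * kl_div (PiE V A) (law V P) (law V Q)"
    by (rule kl_div_law_insert_le[OF W PQ])
  also have "\<dots> \<le> eta_at W * (eta_of (V \<union> parents E W) * kl_div (A x0) P Q)
      + (1 - eta_at W) * (eta_of V * kl_div (A x0) P Q)"
    using eta_at_nonneg[OF W(1)] eta_at_le_1[OF W(1)]
    by (intro add_mono mult_left_mono kl_div_law_le_eta_of U W(2) PQ) auto
  finally show "kl_div (PiE (insert W V) A) (law (insert W V) P) (law (insert W V) Q)
      \<le> (eta_at W * eta_of (V \<union> parents E W) + (1 - eta_at W) * eta_of V) * kl_div (A x0) P Q"
    by (simp add: algebra_simps)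
qed

definition reaches :: "'n set \<Rightarrow> 'n \<Rightarrow> bool" where
  "reaches S w \<longleftrightarrow> (x0, w) \<in> (E \<inter> (insert x0 S \<times> insert x0 S))\<^sup>*"

lemma reaches_in: "reaches S w \<Longrightarrow> w \<in> insert x0 S"
  unfolding reaches_def by (erule rtranclE) auto

lemma reaches_mono: "S \<subseteq> S' \<Longrightarrow> reaches S w \<Longrightarrow> reaches S' w"
  unfolding reaches_def by (erule rtrancl_mono[THEN subsetD, rotated]) auto

text \<open>Paths only climb in the topological order, so a node above w cannot lie on a path to w.\<close>
lemma reaches_insert_below:
  assumes "W \<noteq> x0" "ord w < ord W"
  shows "reaches (insert W S) w \<longleftrightarrow> reaches S w"
proof
  assume "reaches (insert W S) w"
  then have "(x0, w) \<in> (E \<inter> (insert x0 (insert W S) \<times> insert x0 (insert W S)))\<^sup>*"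
    by (simp add: reaches_def)
  then show "reaches S w"
    using assms(2) unfolding reaches_def
  proof (induction rule: rtrancl_induct)
    case (step y z)
    have "ord y < ord W" using ord_edge[of y z] step by auto
    with step show ?case using assms(1) by (auto intro: rtrancl_into_rtrancl)
  qed simp
qed (rule reaches_mono[rotated], auto)

lemma reaches_insert_self:
  assumes "W \<notin> S" "W \<noteq> x0"
  shows "reaches (insert W S) W \<longleftrightarrow> (\<exists>u\<in>parents E W. reaches S u)"
proof
  assume "reaches (insert W S) W"
  then obtain y where y: "reaches (insert W S) y" "(y, W) \<in> E"
    using assms(2) unfolding reaches_def by (auto elim: rtranclE)
  then have "y \<in> parents E W" by (simp add: parents_def)
  moreover have "reaches S y"
    using y(1) reaches_insert_below[OF assms(2) ord_parent] \<open>y \<in> parents E W\<close> by blast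
  ultimately show "\<exists>u\<in>parents E W. reaches S u" by blast
next
  assume "\<exists>u\<in>parents E W. reaches S u"
  then obtain u where u: "u \<in> parents E W" "reaches S u" by blast
  then have "reaches (insert W S) u" "u \<in> insert x0 (insert W S)"
    using reaches_in reaches_mono[of S "insert W S"] by auto
  with u(1) show "reaches (insert W S) W"
    unfolding reaches_def by (auto intro: rtrancl_into_rtrancl simp: parents_def)
qed

lemma perc_eq_sum_site_weight:
  "perc N E x0 p V = (\<Sum>S\<in>Pow (N - {x0}). site_weight p (N - {x0}) S * of_bool (\<exists>w\<in>V. reaches S w))"
  unfolding perc_def site_weight_def reaches_def of_bool_def ..

lemma perc_source: "x0 \<in> V \<Longrightarrow> perc N E x0 p V = 1"
  unfolding perc_eq_sum_site_weight using finite_nodes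
  by (simp add: reaches_def sum_site_weight bexI[of _ x0])

lemma perc_nonneg: "(\<And>v. v \<in> N - {x0} \<Longrightarrow> 0 \<le> p v \<and> p v \<le> 1) \<Longrightarrow> 0 \<le> perc N E x0 p V"
  unfolding perc_eq_sum_site_weight by (intro sum_nonneg mult_nonneg_nonneg site_weight_nonneg) auto

text \<open>With no site kept, nothing but x0 is reached, and that configuration has positive weight.\<close>
lemma perc_less_1:
  assumes "\<And>v. v \<in> N - {x0} \<Longrightarrow> 0 \<le> p v \<and> p v < 1" "x0 \<notin> V"
  shows "perc N E x0 p V < 1"
proof -
  define M where "M = N - {x0}"
  have "finite M" using finite_nodes by (simp add: M_def)
  have p: "0 \<le> p v \<and> p v \<le> 1" if "v \<in> M" for v
    using assms(1) that by (force simp: M_def)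
  have "perc N E x0 p V \<le> (\<Sum>S\<in>Pow M. if S = {} then 0 else site_weight p M S)"
    unfolding perc_eq_sum_site_weight M_def[symmetric]
    using assms(2) reaches_in[of "{}"] p by (intro sum_mono) (auto intro!: site_weight_nonneg)
  also have "\<dots> = (\<Sum>S\<in>Pow M. site_weight p M S - (if S = {} then site_weight p M {} else 0))"
    by (intro sum.cong) auto
  also have "\<dots> = (\<Sum>S\<in>Pow M. site_weight p M S) - site_weight p M {}"
    using \<open>finite M\<close> by (simp add: sum_subtractf)
  also have "\<dots> < 1"
  proof -
    have "0 < site_weight p M {}"
      using \<open>finite M\<close> assms(1) by (intro site_weight_empty_pos) (auto simp: M_def)
    then show ?thesis by (simp add: sum_site_weight[OF \<open>finite M\<close>])
  qed
  finally show ?thesis .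
qed

lemma perc_eq_sum_site_weight_insert:
  assumes "W \<in> N - {x0}"
  shows "perc N E x0 p V = (\<Sum>S\<in>Pow (N - {x0} - {W}). site_weight p (N - {x0} - {W}) S
      * ((1 - p W) * of_bool (\<exists>w\<in>V. reaches S w) + p W * of_bool (\<exists>w\<in>V. reaches (insert W S) w)))"
    (is "_ = ?rhs")
proof -
  have "N - {x0} = insert W (N - {x0} - {W})" using assms by auto
  then have "perc N E x0 p V = (\<Sum>S\<in>Pow (insert W (N - {x0} - {W})).
      site_weight p (insert W (N - {x0} - {W})) S * of_bool (\<exists>w\<in>V. reaches S w))"
    unfolding perc_eq_sum_site_weight by simp
  also have "\<dots> = ?rhs"
    using finite_nodes by (intro sum_site_weight_insert) auto
  finally show ?thesis .
qed

lemma perc_below: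
  assumes "W \<in> N - {x0}" "\<forall>w\<in>X. ord w < ord W"
  shows "perc N E x0 p X = (\<Sum>S\<in>Pow (N - {x0} - {W}). site_weight p (N - {x0} - {W}) S
      * of_bool (\<exists>w\<in>X. reaches S w))"
  unfolding perc_eq_sum_site_weight_insert[OF assms(1)]
  using reaches_insert_below assms by (intro sum.cong refl) (auto simp: algebra_simps)

lemma perc_insert:
  assumes "W \<in> N - {x0}" "W \<notin> V" "\<forall>v\<in>V. ord v < ord W"
  shows "perc N E x0 p (insert W V)
       = p W * perc N E x0 p (V \<union> parents E W) + (1 - p W) * perc N E x0 p V"
proof -
  define M where "M = N - {x0} - {W}"
  have "\<forall>v\<in>V \<union> parents E W. ord v < ord W" using assms(3) ord_parent by auto
  then have below: "perc N E x0 p V = (\<Sum>S\<in>Pow M. site_weight p M S * of_bool (\<exists>w\<in>V. reaches S w))"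
    "perc N E x0 p (V \<union> parents E W)
       = (\<Sum>S\<in>Pow M. site_weight p M S * of_bool (\<exists>w\<in>V \<union> parents E W. reaches S w))"
    using perc_below[OF assms(1)] assms(3) by (auto simp: M_def)
  have "(\<exists>w\<in>insert W V. reaches S w) \<longleftrightarrow> (\<exists>w\<in>V. reaches S w)"
    "(\<exists>w\<in>insert W V. reaches (insert W S) w) \<longleftrightarrow> (\<exists>w\<in>V \<union> parents E W. reaches S w)"
    if "S \<in> Pow M" for S
    using that assms reaches_in[of S W] reaches_insert_self[where S = S and W = W] reaches_insert_below[of W]
    by (auto simp: M_def)
  then have "perc N E x0 p (insert W V) = (\<Sum>S\<in>Pow M. site_weight p M S
      * ((1 - p W) * of_bool (\<exists>w\<in>V. reaches S w) + p W * of_bool (\<exists>w\<in>V \<union> parents E W. reaches S w)))"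
    unfolding perc_eq_sum_site_weight_insert[OF assms(1)] M_def[symmetric]
    by (intro sum.cong refl) simp
  also have "\<dots> = p W * perc N E x0 p (V \<union> parents E W) + (1 - p W) * perc N E x0 p V"
    unfolding below sum_distrib_left sum.distrib[symmetric] by (intro sum.cong refl) (simp add: algebra_simps)
  finally show ?thesis .
qed

lemma perc_eta_at_nonneg: "0 \<le> perc N E x0 eta_at V"
  using eta_at_nonneg eta_at_le_1 by (intro perc_nonneg) auto

lemma eta_of_le_perc_below:
  "V \<subseteq> N \<Longrightarrow> \<forall>v\<in>V. ord v < n \<Longrightarrow> eta_of V \<le> perc N E x0 eta_at V"
proof (induction n arbitrary: V rule: less_induct)
  case (less n)
  consider "x0 \<in> V" | "V = {}" | "x0 \<notin> V" "V \<noteq> {}" by blast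
  then show ?case
  proof cases
    case 1
    then show ?thesis using perc_source eta_of_le_1[OF less.prems(1)] by simp
  next
    case 2
    then show ?thesis using eta_of_empty perc_eta_at_nonneg by simp
  next
    case 3
    then obtain W where W: "W \<in> V" "\<And>v. v \<in> V - {W} \<Longrightarrow> ord v < ord W"
      using ex_ord_max[OF less.prems(1)] by blast
    define V' where "V' = V - {W}"
    have V: "V = insert W V'" "W \<notin> V'" "V' \<subseteq> N" "\<forall>v\<in>V'. ord v < ord W" "W \<in> N - {x0}"
      using W less.prems(1) 3(1) by (auto simp: V'_def)
    have U: "V' \<union> parents E W \<subseteq> N" "\<forall>v\<in>V' \<union> parents E W. ord v < ord W"
      using V parents_subset ord_parent by auto
    have "ord W < n" using less.prems(2) W(1) by blast
    have "eta_of V \<le> eta_at W * eta_of (V' \<union> parents E W) + (1 - eta_at W) * eta_of V'"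
      unfolding V(1) using V by (intro eta_of_insert_le) auto
    also have "\<dots> \<le> eta_at W * perc N E x0 eta_at (V' \<union> parents E W) + (1 - eta_at W) * perc N E x0 eta_at V'"
      using eta_at_nonneg[OF V(5)] eta_at_le_1[OF V(5)] U V(3,4)
      by (intro add_mono mult_left_mono less.IH[OF \<open>ord W < n\<close>]) auto
    also have "\<dots> = perc N E x0 eta_at V"
      unfolding V(1) using V by (intro perc_insert[symmetric]) auto
    finally show ?thesis .
  qed
qed

lemma eta_of_le_perc: "V \<subseteq> N \<Longrightarrow> eta_of V \<le> perc N E x0 eta_at V"
  using finite_nodes
  by (intro eta_of_le_perc_below[where n = "Suc (Max (ord ` N))"]) (auto simp: less_Suc_eq_le)

end

theorem theorem5:
  fixes N :: "'n set" and E :: "('n \<times> 'n) set" and x0 :: 'n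
    and A :: "'n \<Rightarrow> 'a set" and K :: "'n \<Rightarrow> ('n \<Rightarrow> 'a) \<Rightarrow> 'a \<Rightarrow> real"
    and ord :: "'n \<Rightarrow> nat"
  assumes bn: "bayes_net N E x0 A K ord"
  shows "(\<forall>W V. W \<in> N \<and> V \<subseteq> N \<and> W \<notin> V \<and> W \<noteq> x0 \<and> (\<forall>v\<in>V. ord v < ord W) \<longrightarrow>
           eta_set N E x0 A K (insert W V)
             \<le> eta_node E A K W * eta_set N E x0 A K (V \<union> parents E W)
               + (1 - eta_node E A K W) * eta_set N E x0 A K V)
       \<and> (\<forall>V. V \<subseteq> N \<longrightarrow> eta_set N E x0 A K V \<le> perc N E x0 (eta_node E A K) V)
       \<and> ((\<forall>v\<in>N - {x0}. eta_node E A K v < 1) \<longrightarrow>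
           (\<forall>V. V \<subseteq> N \<and> x0 \<notin> V \<longrightarrow> eta_set N E x0 A K V < 1))"
proof -
  interpret bayesian_network N E x0 A K ord by unfold_locales (rule bn)
  have "eta_of V < 1" if "\<forall>v\<in>N - {x0}. eta_at v < 1" "V \<subseteq> N" "x0 \<notin> V" for V
    using eta_of_le_perc[OF that(2)] perc_less_1[of eta_at V] eta_at_nonneg that by fastforce
  then show ?thesis
    using eta_of_insert_le eta_of_le_perc by auto
qed

end
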